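(* Let $n\ge1$ be an integer and, for $j=0,\dots,n$, let $f_{2j+1}$ be a homogeneous polynomial of degree $2j+1$ with complex coefficients in the four entries of a $2\times2$ matrix, not divisible by $\det$ (viewed as a degree-$2$ polynomial). Let $S_{2n+1}\subset\mathbb{K}P^3$ be the surface defined by $F_{2n+1}(A)=0$, where $$F_{2n+1}(A)=\sum_{j=0}^n t^{-j(j+1)}(\det A)^{n-j}f_{2j+1}(A).$$ Let $C_{2j+1}=\{[B]_{\mathbb{C}^*}\in Q(\mathbb{C}): f_{2j+1}(B)=0\}$, and let $H=\{[B]_{\mathbb{C}^*}\in\mathbb{C}P^3: f_1(B)=0,\ \det B\neq0\}$. For $j=1,\dots,n$ let $\sigma_j$ be the section of $\mathcal{S}$ over $Q(\mathbb{C})\setminus(C_{2j-1}\cup C_{2j+1})$ given by $\sigma_j([B]_{\mathbb{C}^*})=\left[\sqrt{-\tfrac{f_{2j-1}(B)}{f_{2j+1}(B)}}\,B\right]_{\mathbb{R}^*}$. Then $$\operatorname{VAL}(S_{2n+1})\subset\Sigma_\infty\cup\Sigma_R\cup\Sigma_C\cup\Sigma_0,$$ where $\Sigma_\infty=\{\infty\}\times C_{2n+1}$, $\Sigma_R=\bigcup_{j=0}^{n-1}((j,j+1)\cap\mathbb{Q})\times\mathcal{S}|_{C_{2j+1}}\ \cup\ ((n,\infty)\cap\mathbb{Q})\times\mathcal{S}|_{C_{2n+1}}$, $\Sigma_C=\bigcup_{j=1}^n\{j\}\times\Big(\sigma_j\big(Q(\mathbb{C})\setminus(C_{2j-1}\cup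 C_{2j+1})\big)\cup\mathcal{S}|_{C_{2j-1}\cap C_{2j+1}}\Big)$, and $\Sigma_0=\{0\}\times\varkappa^\circ(H)$.
   Context: Matrices and classes. For a $2\times 2$ matrix $B=\begin{pmatrix}a&b\\ c&d\end{pmatrix}$ write $B^{\mathbf c}=\begin{pmatrix}d&-b\\ -c&a\end{pmatrix}$; $B^*$ is the conjugate transpose. $\mathbb{C}P^3$ is the projectivization of the space of complex $2\times2$ matrices; $[B]_{\mathbb{C}^*}$ is the class of a nonzero matrix up to nonzero complex scalars, $[B]_{\mathbb{R}^*}$ its class up to nonzero real scalars. $Q(\mathbb{C})=\{[B]_{\mathbb{C}^*}:\det B=0\}$, $PSL_2(\mathbb{C})=\mathbb{C}P^3\setminus Q(\mathbb{C})$, $PSU(2)=\{[U]_{\mathbb{C}^*}:U\in SU(2)\}$. The spherical coamoeba map $\varkappa^\circ\colon PSL_2(\mathbb{C})\to PSU(2)$ sends $[A]_{\mathbb{C}^*}$ with $\det A=1$ to $[A+(A^{\mathbf c})^*]_{\mathbb{R}^*}$ (the class of the unitary factor of the polar decomposition of $A$). Circle bundle. $\mathcal{S}$ is the set of classes $[B]_{\mathbb{R}^*}$ of complex $2\times2$ matrices of rank one, with projection $\pi\colon\mathcal{S}\to Q(\mathbb{C})$, $[B]_{\mathbb{R}^*}\mapsto[B]_{\mathbb{C}^*}$; for $Z\subset Q(\mathbb{C})$, $\mathcal{S}|_Z=\pi^{-1}(Z)$; a section over $Z$ is a map $\sigma\colon Z\to\mathcal{S}$ with $\pi\circ\sigma=\mathrm{id}_Z$.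 Cone notation (subsets of $\mathbb{C}P^3$). For $I\subset(0,\infty)$ and $T\subset\mathcal{S}$, $I\times T:=\{[e^\alpha B+e^{-\alpha}(B^{\mathbf c})^*]_{\mathbb{C}^*}:\alpha\in I,\ [B]_{\mathbb{R}^*}\in T\}$; for $X\subset PSU(2)$, $\{0\}\times X:=X$; for $Y\subset Q(\mathbb{C})$, $\{\infty\}\times Y:=Y$. Field and valuation. $\mathbb{K}$ is the field of Puiseux series in $t$ (with $t\to\infty$) with complex coefficients, i.e. series $\sum_q a_q t^q$ with $a_q\in\mathbb{C}$ and exponents in $\frac1N\mathbb{Z}$ for some $N\ge1$, bounded above. $\mathbb{K}P^3$ is the projectivization of the space of $2\times 2$ matrices over $\mathbb{K}$. Every nonzero matrix $A$ over $\mathbb{K}$ can be written uniquely as $A=t^\alpha B+(\text{terms with exponents}<\alpha)$ with $\alpha\in\mathbb{Q}$ and $B$ a nonzero complex matrix. The map $\operatorname{VAL}\colon\mathbb{K}P^3\to\mathbb{C}P^3$ is: if $\det A=0$, $\operatorname{VAL}([A])=[B]_{\mathbb{C}^*}$; if $\det A\ne0$, rescale $A$ so that $\det A=1$ (then $\alpha\ge0$), and set $\operatorname{VAL}([A])=[e^\alpha B+e^{-\alpha}(B^{\mathbf c})^*]_{\mathbb{C}^*}$. *)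

theory Defs
  imports Complex_Main "HOL-Computational_Algebra.Formal_Laurent_Series"
begin

text \<open>A 2x2 matrix (a b; c d) is written M2 a b c d.\<close>
datatype 'a m2 = M2 'a 'a 'a 'a

fun m2det :: "'a::comm_ring_1 m2 \<Rightarrow> 'a" where
  "m2det (M2 a b c d) = a * d - b * c"

fun m2adj :: "'a::comm_ring_1 m2 \<Rightarrow> 'a m2" where
  "m2adj (M2 a b c d) = M2 d (- b) (- c) a"

fun m2ct :: "complex m2 \<Rightarrow> complex m2" where
  "m2ct (M2 a b c d) = M2 (cnj a) (cnj c) (cnj b) (cnj d)"

fun m2add :: "'a::plus m2 \<Rightarrow> 'a m2 \<Rightarrow> 'a m2" where
  "m2add (M2 a b c d) (M2 a' b' c' d') = M2 (a + a') (b + b') (c + c') (d + d')"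

fun m2scale :: "'a::times \<Rightarrow> 'a m2 \<Rightarrow> 'a m2" where
  "m2scale s (M2 a b c d) = M2 (s * a) (s * b) (s * c) (s * d)"

fun m2map :: "('a \<Rightarrow> 'b) \<Rightarrow> 'a m2 \<Rightarrow> 'b m2" where
  "m2map g (M2 a b c d) = M2 (g a) (g b) (g c) (g d)"

fun m2entries :: "'a m2 \<Rightarrow> 'a set" where
  "m2entries (M2 a b c d) = {a, b, c, d}"

text \<open>Points of CP^3 are represented by nonzero complex matrices; two
  representatives give the same point iff they differ by a nonzero complex scalar.\<close>
definition proj_eq :: "complex m2 \<Rightarrow> complex m2 \<Rightarrow> bool" where
  "proj_eq V W \<longleftrightarrow> (\<exists>c. c \<noteq> 0 \<and> V = m2scale c W)"

text \<open>A polynomial in the entries a,b,c,d is a coefficient function on exponent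
  vectors (i,j,k,l) (monomial a^i b^j c^k d^l).\<close>
type_synonym poly4 = "nat \<times> nat \<times> nat \<times> nat \<Rightarrow> complex"

fun tdeg :: "nat \<times> nat \<times> nat \<times> nat \<Rightarrow> nat" where
  "tdeg (i, j, k, l) = i + j + k + l"

definition hom_poly :: "nat \<Rightarrow> poly4 \<Rightarrow> bool" where
  "hom_poly d p \<longleftrightarrow> (\<forall>e. p e \<noteq> 0 \<longrightarrow> tdeg e = d)"

definition mons :: "nat \<Rightarrow> (nat \<times> nat \<times> nat \<times> nat) set" where
  "mons d = {e. tdeg e = d}"

fun heval :: "nat \<Rightarrow> (complex \<Rightarrow> 'a::comm_ring_1) \<Rightarrow> poly4 \<Rightarrow> 'a m2 \<Rightarrow> 'a" where
  "heval d emb p (M2 a b c e) =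
     (\<Sum>(i, j, k, l)\<in>mons d. emb (p (i, j, k, l)) * a ^ i * b ^ j * c ^ k * e ^ l)"

fun pmul :: "poly4 \<Rightarrow> poly4 \<Rightarrow> poly4" where
  "pmul p q (i, j, k, l) =
     (\<Sum>(a, b, c, d)\<in>{..i} \<times> ({..j} \<times> ({..k} \<times> {..l})).
        p (a, b, c, d) * q (i - a, j - b, k - c, l - d))"

definition detp :: poly4 where
  "detp e = (if e = (1, 0, 0, 1) then 1 else if e = (0, 1, 1, 0) then -1 else 0)"

definition det_dvd :: "poly4 \<Rightarrow> bool" where
  "det_dvd p \<longleftrightarrow> (\<exists>g. finite {e. g e \<noteq> 0} \<and> p = pmul detp g)"

text \<open>For N \<ge> 1, the Laurent series field C((s)) is identified with the subfield of
  Puiseux series with exponents in (1/N)Z via s = t^(-1/N): the Laurent series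
  with coefficients c_k represents sum_k c_k t^(-k/N) (exponents bounded above,
  as required for t \<rightarrow> \<infinity>). Every finite set of Puiseux series lies in one such
  subfield, so a matrix over K is given by some N \<ge> 1 and a matrix over
  complex fls.\<close>

text \<open>Leading form of a nonzero matrix A: A = t^alpha B + lower order terms.
  The leading s-order is the minimal subdegree among the nonzero entries.\<close>
definition lead_ord :: "complex fls m2 \<Rightarrow> int" where
  "lead_ord A = Min (fls_subdegree ` {x \<in> m2entries A. x \<noteq> 0})"

definition lead_mat :: "complex fls m2 \<Rightarrow> complex m2" where
  "lead_mat A = m2map (\<lambda>x. fls_nth x (lead_ord A)) A"

definition lead_exp :: "nat \<Rightarrow> complex fls m2 \<Rightarrow> real" where
  "lead_exp N A = - real_of_int (lead_ord A) / real N"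

definition cone_pt :: "real \<Rightarrow> complex m2 \<Rightarrow> complex m2" where
  "cone_pt \<alpha> B = m2add (m2scale (complex_of_real (exp \<alpha>)) B)
                         (m2scale (complex_of_real (exp (- \<alpha>))) (m2ct (m2adj B)))"

text \<open>VAL of the class of A, for a representative A with det A = 0 or det A = 1
  (the normalisation used in the definition of VAL).\<close>
definition VAL_rep :: "nat \<Rightarrow> complex fls m2 \<Rightarrow> complex m2" where
  "VAL_rep N A = (if m2det A = 0 then lead_mat A
                  else cone_pt (lead_exp N A) (lead_mat A))"

text \<open>F_{2n+1}(A) = sum_j t^(-j(j+1)) (det A)^(n-j) f_{2j+1}(A), where f j is f_{2j+1}
  and t^(-j(j+1)) = s^(N j (j+1)).\<close>
definition F_eval :: "nat \<Rightarrow> (nat \<Rightarrow> poly4) \<Rightarrow> nat \<Rightarrow> complex fls m2 \<Rightarrow> complex fls" where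
  "F_eval n f N A = (\<Sum>j\<le>n. fls_X ^ (N * j * (j + 1)) * (m2det A) ^ (n - j)
                              * heval (2 * j + 1) fls_const (f j) A)"

definition Qset :: "complex m2 \<Rightarrow> bool" where
  "Qset B \<longleftrightarrow> B \<noteq> M2 0 0 0 0 \<and> m2det B = 0"

text \<open>C_{2j+1} (with d = 2j+1, p = f_{2j+1}); also the fibre of S over it
  (rank-one matrices B whose class lies in it).\<close>
definition Cset :: "nat \<Rightarrow> poly4 \<Rightarrow> complex m2 \<Rightarrow> bool" where
  "Cset d p B \<longleftrightarrow> Qset B \<and> heval d id p B = 0"

definition Sigma_inf :: "nat \<Rightarrow> (nat \<Rightarrow> poly4) \<Rightarrow> complex m2 set" where
  "Sigma_inf n f = {V. Cset (2 * n + 1) (f n) V}"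

definition Sigma_R :: "nat \<Rightarrow> (nat \<Rightarrow> poly4) \<Rightarrow> complex m2 set" where
  "Sigma_R n f = {V. \<exists>W. proj_eq V W \<and>
     ((\<exists>j<n. \<exists>\<alpha>::rat. real j < real_of_rat \<alpha> \<and> real_of_rat \<alpha> < real j + 1 \<and>
        (\<exists>B. Cset (2 * j + 1) (f j) B \<and> W = cone_pt (real_of_rat \<alpha>) B))
      \<or> (\<exists>\<alpha>::rat. real n < real_of_rat \<alpha> \<and>
        (\<exists>B. Cset (2 * n + 1) (f n) B \<and> W = cone_pt (real_of_rat \<alpha>) B)))}"

text \<open>sigma_j([B]) = [sqrt(-f_{2j-1}(B)/f_{2j+1}(B)) B]_{R*}; f (j-1) is f_{2j-1}.\<close>
definition Sigma_C :: "nat \<Rightarrow> (nat \<Rightarrow> poly4) \<Rightarrow> complex m2 set" where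
  "Sigma_C n f = {V. \<exists>W. proj_eq V W \<and> (\<exists>j\<in>{1..n}.
     (\<exists>B. Qset B \<and> \<not> Cset (2 * j - 1) (f (j - 1)) B \<and> \<not> Cset (2 * j + 1) (f j) B \<and>
        W = cone_pt (real j)
              (m2scale (csqrt (- heval (2 * j - 1) id (f (j - 1)) B
                                / heval (2 * j + 1) id (f j) B)) B))
     \<or> (\<exists>B. Cset (2 * j - 1) (f (j - 1)) B \<and> Cset (2 * j + 1) (f j) B \<and>
        W = cone_pt (real j) B))}"

text \<open>{0} x kappa(H), H = {[B] : f_1(B) = 0, det B \<noteq> 0}; kappa([A]) = [A + (A^c)^*]
  for det A = 1.\<close>
definition Sigma_0 :: "(nat \<Rightarrow> poly4) \<Rightarrow> complex m2 set" where
  "Sigma_0 f = {V. \<exists>B. m2det B \<noteq> 0 \<and> heval 1 id (f 0) B = 0 \<and>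
     (\<exists>\<mu> A. A = m2scale \<mu> B \<and> m2det A = 1 \<and> proj_eq V (m2add A (m2ct (m2adj A))))}"

end

theory Submission
  imports Defs
begin

text \<open>Write s = t^(-1/N), let m be the least s-order of the entries of A and B the matrix
  of their coefficients at s^m. If det A = 1, the j-th summand of F(A) vanishes below the order
  E_j = N j (j + 1) + (2 j + 1) m and has coefficient f_{2j+1}(B) there, so, as F(A) = 0, the
  values f_{2j+1}(B) at the minimisers j of E_j sum to zero. Moreover m <= 0, with det B = 1 if
  m = 0 and det B = 0 otherwise. For m = 0 the only minimiser is j = 0, giving f_1(B) = 0.
  For m = -q < 0, E_j is a convex parabola in j with vertex at q/N - 1/2, so it has a unique
  minimiser j on {0..n}, and f_{2j+1}(B) = 0 with q/N in (j, j + 1) or q/N > n = j, unless q/N = j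
  is an integer: then E_{j-1} = E_j is the minimum and f_{2j-1}(B) + f_{2j+1}(B) = 0, which puts
  B on the section sigma_j or over both C_{2j-1} and C_{2j+1}. If det A = 0, only the last
  summand of F survives and f_{2n+1}(B) = 0.\<close>

unbundle fps_syntax

definition vanishes_below :: "int \<Rightarrow> 'a::zero fls \<Rightarrow> bool" where
  "vanishes_below m x \<longleftrightarrow> (\<forall>k<m. x $$ k = 0)"

lemma vanishes_below_iff: "vanishes_below m x \<longleftrightarrow> x = 0 \<or> m \<le> fls_subdegree x"
  unfolding vanishes_below_def
  using fls_subdegree_geI[of x m] nth_fls_subdegree_nonzero[of x] by force

lemma vanishes_below_mult:
  fixes x y :: "'a::{comm_monoid_add, mult_zero} fls"
  assumes "vanishes_below a x" "vanishes_below b y"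
  shows "vanishes_below (a + b) (x * y)"
proof (cases "x = 0 \<or> y = 0")
  case False
  with assms have "a + b \<le> fls_subdegree x + fls_subdegree y"
    by (auto simp: vanishes_below_iff)
  then show ?thesis
    by (auto simp: vanishes_below_def intro: fls_times_nth_eq0)
qed (auto simp: vanishes_below_def)

lemma fls_nth_mult_at_bound:
  fixes x y :: "'a::{comm_monoid_add, mult_zero} fls"
  assumes "vanishes_below a x" "vanishes_below b y"
  shows "(x * y) $$ (a + b) = x $$ a * y $$ b"
proof (cases "x = 0 \<or> y = 0")
  case False
  with assms have "a \<le> fls_subdegree x" "b \<le> fls_subdegree y"
    by (auto simp: vanishes_below_iff)
  then consider (at_subdegrees) "a = fls_subdegree x" "b = fls_subdegree y"
    | (below_subdegrees) "a + b < fls_subdegree x + fls_subdegree y"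
        "a < fls_subdegree x \<or> b < fls_subdegree y"
    by linarith
  then show ?thesis
  proof cases
    case below_subdegrees
    then show ?thesis
      by (metis fls_eq0_below_subdegree fls_times_nth_eq0 mult_zero_left mult_zero_right)
  qed simp
qed auto

lemma vanishes_below_power:
  fixes x :: "'a::semiring_1 fls"
  assumes "vanishes_below a x"
  shows "vanishes_below (int k * a) (x ^ k)"
proof (induction k)
  case (Suc k)
  then have "vanishes_below (a + int k * a) (x * x ^ k)"
    using assms by (rule vanishes_below_mult[rotated])
  then show ?case by (simp add: algebra_simps)
qed (simp add: vanishes_below_def)

lemma fls_nth_power_at_bound:
  fixes x :: "'a::comm_semiring_1 fls"
  assumes "vanishes_below a x"
  shows "(x ^ k) $$ (int k * a) = (x $$ a) ^ k"
proof (induction k)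
  case (Suc k)
  have "(x * x ^ k) $$ (a + int k * a) = x $$ a * (x ^ k) $$ (int k * a)"
    using assms vanishes_below_power[OF assms] by (rule fls_nth_mult_at_bound)
  then show ?case using Suc by (simp add: algebra_simps)
qed simp

lemma vanishes_below_const_mult:
  fixes x :: "'a::{comm_monoid_add, mult_zero} fls"
  shows "vanishes_below m x \<Longrightarrow> vanishes_below m (fls_const z * x)"
  by (simp add: vanishes_below_def)

lemma vanishes_below_sum:
  "(\<And>i. i \<in> S \<Longrightarrow> vanishes_below m (g i)) \<Longrightarrow> vanishes_below m (sum g S)"
  by (simp add: vanishes_below_def fls_nth_sum)

lemma
  fixes a b c e :: "'a::comm_semiring_1 fls" and i j k l :: nat
  assumes "vanishes_below m a" "vanishes_below m b" "vanishes_below m c" "vanishes_below m e"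
  shows vanishes_below_monomial:
      "vanishes_below (int (i + j + k + l) * m) (fls_const z * a ^ i * b ^ j * c ^ k * e ^ l)"
    and fls_nth_monomial_at_bound:
      "(fls_const z * a ^ i * b ^ j * c ^ k * e ^ l) $$ (int (i + j + k + l) * m)
         = z * (a $$ m) ^ i * (b $$ m) ^ j * (c $$ m) ^ k * (e $$ m) ^ l"
proof -
  have d: "int (i + j + k + l) * m = int i * m + int j * m + int k * m + int l * m"
    by (simp add: algebra_simps)
  note powers = assms[THEN vanishes_below_power]
  show "vanishes_below (int (i + j + k + l) * m) (fls_const z * a ^ i * b ^ j * c ^ k * e ^ l)"
    unfolding d by (intro vanishes_below_mult vanishes_below_const_mult powers)
  show "(fls_const z * a ^ i * b ^ j * c ^ k * e ^ l) $$ (int (i + j + k + l) * m)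
      = z * (a $$ m) ^ i * (b $$ m) ^ j * (c $$ m) ^ k * (e $$ m) ^ l"
    unfolding d
    by (simp add: fls_nth_mult_at_bound vanishes_below_mult vanishes_below_const_mult powers
        assms[THEN fls_nth_power_at_bound])
qed

lemma
  assumes "\<forall>x\<in>m2entries A. vanishes_below m x"
  shows vanishes_below_heval: "vanishes_below (int d * m) (heval d fls_const p A)"
    and fls_nth_heval_at_bound:
      "heval d fls_const p A $$ (int d * m) = heval d id p (m2map (\<lambda>x. x $$ m) A)"
proof -
  obtain a b c e where A: "A = M2 a b c e" by (cases A)
  have entries: "vanishes_below m a" "vanishes_below m b" "vanishes_below m c" "vanishes_below m e"
    using assms by (simp_all add: A)
  have monomial:
    "vanishes_below (int d * m) (fls_const (p (i, j, k, l)) * a ^ i * b ^ j * c ^ k * e ^ l)"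
    "(fls_const (p (i, j, k, l)) * a ^ i * b ^ j * c ^ k * e ^ l) $$ (int d * m)
       = p (i, j, k, l) * (a $$ m) ^ i * (b $$ m) ^ j * (c $$ m) ^ k * (e $$ m) ^ l"
    if "(i, j, k, l) \<in> mons d" for i j k l
  proof -
    from that have "d = i + j + k + l" by (simp add: mons_def)
    then show "vanishes_below (int d * m) (fls_const (p (i, j, k, l)) * a ^ i * b ^ j * c ^ k * e ^ l)"
      and "(fls_const (p (i, j, k, l)) * a ^ i * b ^ j * c ^ k * e ^ l) $$ (int d * m)
       = p (i, j, k, l) * (a $$ m) ^ i * (b $$ m) ^ j * (c $$ m) ^ k * (e $$ m) ^ l"
      using vanishes_below_monomial[OF entries] fls_nth_monomial_at_bound[OF entries] by simp_all
  qed
  show "vanishes_below (int d * m) (heval d fls_const p A)"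
    unfolding A heval.simps
    by (rule vanishes_below_sum) (auto simp: monomial)
  show "heval d fls_const p A $$ (int d * m) = heval d id p (m2map (\<lambda>x. x $$ m) A)"
    unfolding A heval.simps m2map.simps fls_nth_sum
    by (rule sum.cong) (auto simp: monomial)
qed

lemma
  fixes A :: "'a::comm_ring_1 fls m2"
  assumes "\<forall>x\<in>m2entries A. vanishes_below m x"
  shows vanishes_below_det: "vanishes_below (2 * m) (m2det A)"
    and fls_nth_det_at_bound: "m2det A $$ (2 * m) = m2det (m2map (\<lambda>x. x $$ m) A)"
proof -
  obtain a b c e where A: "A = M2 a b c e" by (cases A)
  have entries: "vanishes_below m a" "vanishes_below m b" "vanishes_below m c" "vanishes_below m e"
    using assms by (simp_all add: A)
  have "vanishes_below (m + m) (a * e)" "vanishes_below (m + m) (b * c)"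
    using entries by (simp_all only: vanishes_below_mult)
  then show "vanishes_below (2 * m) (m2det A)"
    unfolding A mult_2 by (simp add: vanishes_below_def)
  have "(a * e) $$ (m + m) = a $$ m * e $$ m" "(b * c) $$ (m + m) = b $$ m * c $$ m"
    using entries by (simp_all only: fls_nth_mult_at_bound)
  then show "m2det A $$ (2 * m) = m2det (m2map (\<lambda>x. x $$ m) A)"
    unfolding A mult_2 by simp
qed

lemma vanishes_below_lead_ord: "x \<in> m2entries A \<Longrightarrow> vanishes_below (lead_ord A) x"
  unfolding vanishes_below_iff lead_ord_def
  by (cases A) (auto intro: Min_le)

lemma lead_mat_nonzero:
  assumes "A \<noteq> M2 0 0 0 0"
  shows "lead_mat A \<noteq> M2 0 0 0 0"
proof -
  let ?S = "{x \<in> m2entries A. x \<noteq> 0}"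
  have "?S \<noteq> {}" "finite ?S"
    using assms by (cases A; auto)+
  then have "lead_ord A \<in> fls_subdegree ` ?S"
    unfolding lead_ord_def by (intro Min_in) auto
  then obtain x where "x \<in> m2entries A" "x \<noteq> 0" "x $$ lead_ord A \<noteq> 0"
    by auto
  then show ?thesis
    unfolding lead_mat_def by (cases A) auto
qed

lemma lead_mat_eq: "lead_mat A = m2map (\<lambda>x. x $$ lead_ord A) A"
  by (simp add: lead_mat_def)

definition F_term_ord :: "nat \<Rightarrow> int \<Rightarrow> nat \<Rightarrow> int" where
  "F_term_ord N m j = int (N * j * (j + 1)) + int (2 * j + 1) * m"

lemma F_eval_lead_coeff_sum:
  assumes "m2det A = 1" "F_eval n f N A = 0"
    and "\<forall>j\<le>n. e \<le> F_term_ord N (lead_ord A) j"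
  shows "(\<Sum>j | j \<le> n \<and> F_term_ord N (lead_ord A) j = e.
            heval (2 * j + 1) id (f j) (lead_mat A)) = 0"
proof -
  let ?E = "F_term_ord N (lead_ord A)"
  define T where "T j = fls_X ^ (N * j * (j + 1)) * heval (2 * j + 1) fls_const (f j) A" for j
  have entries: "\<forall>x\<in>m2entries A. vanishes_below (lead_ord A) x"
    by (simp add: vanishes_below_lead_ord)
  have X: "vanishes_below (int k) (fls_X ^ k :: complex fls)" for k
    by (simp add: vanishes_below_def)
  have T_vanishes: "vanishes_below (?E j) (T j)" for j
    unfolding T_def F_term_ord_def
    using X entries by (intro vanishes_below_mult vanishes_below_heval)
  have T_nth: "T j $$ ?E j = heval (2 * j + 1) id (f j) (lead_mat A)" for j
    unfolding T_def F_term_ord_def lead_mat_eq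
    by (simp only: fls_nth_mult_at_bound[OF X vanishes_below_heval[OF entries]]
        fls_nth_heval_at_bound[OF entries] fls_X_power_nth) simp
  have "0 = (\<Sum>j\<le>n. T j) $$ e"
    using assms(1,2) by (simp add: F_eval_def T_def)
  also have "\<dots> = (\<Sum>j\<le>n. T j $$ e)"
    by (rule fls_nth_sum)
  also have "\<dots> = (\<Sum>j | j \<le> n \<and> ?E j = e. T j $$ e)"
  proof (rule sum.mono_neutral_right)
    show "\<forall>j\<in>{..n} - {j. j \<le> n \<and> ?E j = e}. T j $$ e = 0"
      using assms(3) T_vanishes by (force simp: vanishes_below_def)
  qed auto
  also have "\<dots> = (\<Sum>j | j \<le> n \<and> ?E j = e. heval (2 * j + 1) id (f j) (lead_mat A))"
    by (rule sum.cong) (auto simp: T_nth)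
  finally show ?thesis by simp
qed

lemma F_eval_singular:
  assumes "m2det A = 0" "F_eval n f N A = 0"
  shows "heval (2 * n + 1) id (f n) (lead_mat A) = 0"
proof -
  have "F_eval n f N A = fls_X ^ (N * n * (n + 1)) * heval (2 * n + 1) fls_const (f n) A"
    unfolding F_eval_def assms(1) by (subst sum.remove[of _ n]) (auto intro!: sum.neutral)
  with assms(2) have "heval (2 * n + 1) fls_const (f n) A = 0"
    by simp
  then show ?thesis
    using fls_nth_heval_at_bound[of A "lead_ord A" "2 * n + 1" "f n"]
    by (simp add: vanishes_below_lead_ord lead_mat_eq)
qed

lemma F_term_ord_diff:
  "F_term_ord N m j - F_term_ord N m k = (int j - int k) * (int N * (int j + int k + 1) + 2 * m)"
  by (simp add: F_term_ord_def algebra_simps)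

lemma F_term_ord_less_below:
  assumes "int N * int j0 < - m" "j < j0"
  shows "F_term_ord N m j0 < F_term_ord N m j"
proof -
  have "int N * (int j + int j0 + 1) \<le> int N * (2 * int j0)"
    using assms(2) by (intro mult_left_mono) auto
  then have "int N * (int j + int j0 + 1) + 2 * m < 0"
    using assms(1) by linarith
  with assms(2) have "0 < (int j - int j0) * (int N * (int j + int j0 + 1) + 2 * m)"
    by (intro mult_neg_neg) auto
  then show ?thesis
    using F_term_ord_diff[of N m j j0] by linarith
qed

lemma F_term_ord_less_above:
  assumes "- m < int N * (int j0 + 1)" "j0 < j"
  shows "F_term_ord N m j0 < F_term_ord N m j"
proof -
  have "int N * (2 * (int j0 + 1)) \<le> int N * (int j + int j0 + 1)"
    using assms(2) by (intro mult_left_mono) auto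
  then have "0 < int N * (int j + int j0 + 1) + 2 * m"
    using assms(1) by linarith
  with assms(2) have "0 < (int j - int j0) * (int N * (int j + int j0 + 1) + 2 * m)"
    by (intro mult_pos_pos) auto
  then show ?thesis
    using F_term_ord_diff[of N m j j0] by linarith
qed

lemma F_term_ord_eq_pred:
  assumes "- m = int N * int j0"
  shows "F_term_ord N m (j0 - 1) = F_term_ord N m j0"
proof (cases "j0 = 0")
  case False
  then have "int (j0 - 1) = int j0 - 1"
    by simp
  then show ?thesis
    using F_term_ord_diff[of N m "j0 - 1" j0] assms by (simp add: algebra_simps)
qed simp

lemma F_eval_lead_coeff_unique_min:
  assumes "m2det A = 1" "F_eval n f N A = 0" "j0 \<le> n"
    and "\<And>j. j \<le> n \<Longrightarrow> j \<noteq> j0 \<Longrightarrow> F_term_ord N (lead_ord A) j0 < F_term_ord N (lead_ord A) j"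
  shows "heval (2 * j0 + 1) id (f j0) (lead_mat A) = 0"
proof -
  have "{j. j \<le> n \<and> F_term_ord N (lead_ord A) j = F_term_ord N (lead_ord A) j0} = {j0}"
    using assms(3,4) by force
  with F_eval_lead_coeff_sum[of A n f N "F_term_ord N (lead_ord A) j0"] assms show ?thesis
    by force
qed

lemma F_eval_lead_coeff_tie:
  assumes "m2det A = 1" "F_eval n f N A = 0" "0 < N"
    and "- lead_ord A = int N * int j0" "1 \<le> j0" "j0 \<le> n"
  shows "heval (2 * j0 - 1) id (f (j0 - 1)) (lead_mat A)
    + heval (2 * j0 + 1) id (f j0) (lead_mat A) = 0"
proof -
  let ?E = "F_term_ord N (lead_ord A)"
  have tie: "?E (j0 - 1) = ?E j0"
    using assms(4) by (rule F_term_ord_eq_pred)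
  have less: "?E j0 < ?E j" if "j \<noteq> j0 - 1" "j \<noteq> j0" for j
  proof (cases "j < j0")
    case True
    with that assms(3-5) have "?E (j0 - 1) < ?E j"
      by (intro F_term_ord_less_below) (auto simp: algebra_simps of_nat_diff)
    with tie show ?thesis by simp
  next
    case False
    with that assms(3,4) show ?thesis
      by (intro F_term_ord_less_above) (auto simp: algebra_simps)
  qed
  have min: "\<forall>j\<le>n. ?E j0 \<le> ?E j"
    using less tie by (metis order.refl order.strict_implies_order)
  have "{j. j \<le> n \<and> ?E j = ?E j0} = {j0 - 1, j0}"
  proof
    show "{j. j \<le> n \<and> ?E j = ?E j0} \<subseteq> {j0 - 1, j0}"
      using less by fastforce
    show "{j0 - 1, j0} \<subseteq> {j. j \<le> n \<and> ?E j = ?E j0}"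
      using tie assms(6) by auto
  qed
  with F_eval_lead_coeff_sum[of A n f N "?E j0"] assms(1,2,5) min
  have "heval (2 * (j0 - 1) + 1) id (f (j0 - 1)) (lead_mat A)
      + heval (2 * j0 + 1) id (f j0) (lead_mat A) = 0"
    by simp
  moreover have "2 * j0 - 1 = 2 * (j0 - 1) + 1"
    using assms(5) by simp
  ultimately show ?thesis
    by simp
qed

lemma m2scale_one [simp]: "m2scale (1::'a::monoid_mult) X = X"
  by (cases X) simp

lemma proj_eq_refl: "proj_eq V V"
  unfolding proj_eq_def by (intro exI[of _ 1]) simp

lemma cone_pt_mem_Sigma_R_between:
  assumes "j < n" "Cset (2 * j + 1) (f j) B"
    and "real j < real_of_rat r" "real_of_rat r < real j + 1"
  shows "cone_pt (real_of_rat r) B \<in> Sigma_R n f"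
  unfolding Sigma_R_def using assms proj_eq_refl by blast

lemma cone_pt_mem_Sigma_R_beyond:
  assumes "Cset (2 * n + 1) (f n) B" "real n < real_of_rat r"
  shows "cone_pt (real_of_rat r) B \<in> Sigma_R n f"
  unfolding Sigma_R_def using assms proj_eq_refl by blast

lemma cone_pt_mem_Sigma_C:
  assumes "j \<in> {1..n}" "Qset B"
    and "heval (2 * j - 1) id (f (j - 1)) B + heval (2 * j + 1) id (f j) B = 0"
  shows "cone_pt (real j) B \<in> Sigma_C n f"
proof (cases "heval (2 * j + 1) id (f j) B = 0")
  case True
  with assms show ?thesis
    unfolding Sigma_C_def Cset_def
    by (intro CollectI exI[of _ "cone_pt (real j) B"] conjI proj_eq_refl bexI[of _ j] disjI2
        exI[of _ B]) simp_all
next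
  case False
  with assms(3) have "- heval (2 * j - 1) id (f (j - 1)) B / heval (2 * j + 1) id (f j) B = 1"
    by (simp add: add_eq_0_iff)
  with False assms show ?thesis
    unfolding Sigma_C_def Cset_def
    by (intro CollectI exI[of _ "cone_pt (real j) B"] conjI proj_eq_refl bexI[of _ j] disjI1
        exI[of _ B]) (simp_all add: add_eq_0_iff)
qed

lemma cone_pt_zero_mem_Sigma_0:
  assumes "m2det B = 1" "heval 1 id (f 0) B = 0"
  shows "cone_pt 0 B \<in> Sigma_0 f"
  unfolding Sigma_0_def cone_pt_def using assms proj_eq_refl
  by (intro CollectI exI[of _ B] conjI exI[of _ 1]) simp_all

lemma
  assumes "m2det A = 1"
  shows lead_ord_nonpos: "lead_ord A \<le> 0"
    and det_lead_mat: "m2det (lead_mat A) = (if lead_ord A = 0 then 1 else 0)"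
proof -
  have entries: "\<forall>x\<in>m2entries A. vanishes_below (lead_ord A) x"
    by (simp add: vanishes_below_lead_ord)
  from vanishes_below_det[OF entries] show "lead_ord A \<le> 0"
    using assms by (simp add: vanishes_below_iff)
  from fls_nth_det_at_bound[OF entries] show "m2det (lead_mat A) = (if lead_ord A = 0 then 1 else 0)"
    using assms by (simp add: lead_mat_eq)
qed

lemma VAL_rep_mem_Sigma_inf:
  assumes "A \<noteq> M2 0 0 0 0" "m2det A = 0" "F_eval n f N A = 0"
  shows "VAL_rep N A \<in> Sigma_inf n f"
proof -
  have "m2det (lead_mat A) = 0"
    using fls_nth_det_at_bound[of A "lead_ord A"] assms(2)
    by (simp add: vanishes_below_lead_ord lead_mat_eq)
  with assms F_eval_singular[OF assms(2,3)] show ?thesis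
    by (simp add: VAL_rep_def Sigma_inf_def Cset_def Qset_def lead_mat_nonzero)
qed

lemma VAL_rep_mem_Sigma_0:
  assumes "N \<ge> 1" "m2det A = 1" "lead_ord A = 0" "F_eval n f N A = 0"
  shows "VAL_rep N A \<in> Sigma_0 f"
proof -
  have "F_term_ord N 0 0 < F_term_ord N 0 j" if "j \<noteq> 0" for j
    using assms(1) that by (simp add: F_term_ord_def del: of_nat_mult of_nat_add)
  with F_eval_lead_coeff_unique_min[of A n f N 0] assms(2-4)
  have "heval 1 id (f 0) (lead_mat A) = 0"
    by simp
  then show ?thesis
    using assms cone_pt_zero_mem_Sigma_0[of "lead_mat A" f]
    by (simp add: VAL_rep_def lead_exp_def det_lead_mat)
qed

lemma int_cases_between_multiples:
  fixes q :: int and N n :: nat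
  assumes "0 < q" "0 < N"
  obtains (multiple) j where "q = int N * int j" "1 \<le> j" "j \<le> n"
    | (beyond) "int N * int n < q"
    | (between) j where "j < n" "int N * int j < q" "q < int N * (int j + 1)"
proof -
  define j where "j = nat (q div int N)"
  have j: "int j = q div int N"
    using assms by (simp add: j_def pos_imp_zdiv_nonneg_iff)
  have "q = int N * (q div int N) + q mod int N" "0 \<le> q mod int N" "q mod int N < int N"
    using assms by simp_all
  then have lower: "int N * int j \<le> q" and upper: "q < int N * (int j + 1)"
    unfolding j distrib_left by linarith+
  show ?thesis
  proof (cases "int N * int n < q")
    case not_beyond: False
    show ?thesis
    proof (cases "int N * int j = q")
      case True
      with not_beyond assms have "j \<le> n" "j \<noteq> 0"
        by (auto simp: mult_le_cancel_left_pos zero_less_mult_iff)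
      with True show ?thesis
        by (intro multiple) auto
    next
      case False
      with lower have "int N * int j < q"
        by simp
      with not_beyond have "int N * int j < int N * int n"
        by linarith
      then have "j < n"
        by (simp add: mult_less_cancel_left)
      with \<open>int N * int j < q\<close> upper show ?thesis
        by (intro between)
    qed
  qed (rule beyond)
qed

lemma of_int_less_divide_iff:
  "0 < N \<Longrightarrow> real_of_int x < real_of_int q / real N \<longleftrightarrow> int N * x < q"
  using of_int_less_iff[of "int N * x" q] by (simp add: pos_less_divide_eq mult.commute)

lemma divide_less_of_int_iff:
  "0 < N \<Longrightarrow> real_of_int q / real N < real_of_int x \<longleftrightarrow> q < int N * x"
  using of_int_less_iff[of q "int N * x"] by (simp add: pos_divide_less_eq mult.commute)

lemma VAL_rep_mem_Sigma_R_Sigma_C: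
  assumes "N \<ge> 1" "A \<noteq> M2 0 0 0 0" "m2det A = 1" "lead_ord A < 0" "F_eval n f N A = 0"
  shows "VAL_rep N A \<in> Sigma_R n f \<union> Sigma_C n f"
proof -
  define q where "q = - lead_ord A"
  define r where "r = (of_int q / of_nat N :: rat)"
  let ?B = "lead_mat A"
  let ?E = "F_term_ord N (lead_ord A)"
  let ?g = "\<lambda>j. heval (2 * j + 1) id (f j) ?B"
  have "q > 0" "N > 0"
    using assms(1,4) by (simp_all add: q_def)
  have r: "real_of_rat r = real_of_int q / real N"
    by (simp add: r_def of_rat_divide)
  have QB: "Qset ?B"
    using assms by (simp add: Qset_def lead_mat_nonzero det_lead_mat)
  have VAL: "VAL_rep N A = cone_pt (real_of_rat r) ?B"
    using assms(3) by (simp add: VAL_rep_def lead_exp_def r q_def)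
  show ?thesis
  proof (cases rule: int_cases_between_multiples[OF \<open>q > 0\<close> \<open>N > 0\<close>, of n,
        case_names multiple beyond between])
    case (multiple j0)
    then have "heval (2 * j0 - 1) id (f (j0 - 1)) ?B + ?g j0 = 0"
      using assms(3,5) \<open>N > 0\<close> by (intro F_eval_lead_coeff_tie) (simp_all add: q_def)
    then have "cone_pt (real j0) ?B \<in> Sigma_C n f"
      using multiple QB by (intro cone_pt_mem_Sigma_C) simp_all
    moreover have "real_of_rat r = real j0"
      using multiple \<open>N > 0\<close> by (simp add: r)
    ultimately show ?thesis
      by (simp add: VAL)
  next
    case beyond
    then have "?g n = 0"
      using assms(3,5)
      by (intro F_eval_lead_coeff_unique_min) (auto simp: q_def intro: F_term_ord_less_below)
    moreover have "real n < real_of_rat r"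
      using beyond of_int_less_divide_iff[OF \<open>N > 0\<close>, of "int n" q] by (simp add: r)
    ultimately show ?thesis
      using QB by (simp add: VAL Cset_def cone_pt_mem_Sigma_R_beyond)
  next
    case (between j0)
    have "?E j0 < ?E j" if "j \<noteq> j0" for j
      using that between
      by (cases "j < j0") (auto simp: q_def intro: F_term_ord_less_below F_term_ord_less_above)
    then have "?g j0 = 0"
      using between assms(3,5) by (intro F_eval_lead_coeff_unique_min) auto
    moreover have "real j0 < real_of_rat r" "real_of_rat r < real j0 + 1"
      using between of_int_less_divide_iff[OF \<open>N > 0\<close>, of "int j0" q]
        divide_less_of_int_iff[OF \<open>N > 0\<close>, of q "int j0 + 1"]
      by (simp_all add: r)
    ultimately show ?thesis
      using QB between by (simp add: VAL Cset_def cone_pt_mem_Sigma_R_between)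
  qed
qed

theorem theorem5p2:
  fixes n N :: nat and f :: "nat \<Rightarrow> poly4" and A :: "complex fls m2"
  assumes "n \<ge> 1"
    and "\<forall>j\<le>n. hom_poly (2 * j + 1) (f j) \<and> \<not> det_dvd (f j)"
    and "N \<ge> 1"
    and "A \<noteq> M2 0 0 0 0"
    and "F_eval n f N A = 0"
    and "m2det A = 0 \<or> m2det A = 1"
  shows "VAL_rep N A \<in> Sigma_inf n f \<union> Sigma_R n f \<union> Sigma_C n f \<union> Sigma_0 f"
proof -
  consider "m2det A = 0" | "m2det A = 1" "lead_ord A = 0" | "m2det A = 1" "lead_ord A < 0"
    using assms(6) lead_ord_nonpos by fastforce
  then show ?thesis
  proof cases
    case 1
    then show ?thesis using assms VAL_rep_mem_Sigma_inf by blast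
  next
    case 2
    then show ?thesis using assms VAL_rep_mem_Sigma_0 by blast
  next
    case 3
    then show ?thesis using assms VAL_rep_mem_Sigma_R_Sigma_C by blast
  qed
qed

end
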